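(* For all positive integers $m,n,a,b$ with $m<n$ and $a<b$, we have $\mathcal{F}(m,a,b,n)>\mathcal{F}(m,b,a,n)$.
   Context: $\mathcal{F}$ is defined on finite tuples of positive integers recursively: $\mathcal{F}(a)=1$ for every positive integer $a$; for $s\ge2$, $\mathcal{F}(a_1,\dots,a_s)=\sum_{i=1}^s\mathcal{F}(a_1,\dots,a_{i-1},a_i-1,a_{i+1},\dots,a_s)$, where a tuple with a zero entry is reduced by: $\mathcal{F}(0,a_2,\dots,a_t)=\mathcal{F}(a_2,\dots,a_t)$, $\mathcal{F}(a_1,\dots,a_t,0)=\mathcal{F}(a_1,\dots,a_t)$, and $\mathcal{F}(a_1,\dots,a_r,0,a_{r+2},\dots,a_s)=\mathcal{F}(a_1,\dots,a_{r-1},a_r+a_{r+2},a_{r+3},\dots,a_s)$. *)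

theory Defs
  imports Main
begin

text \<open>Reduction of a tuple (list) containing zero entries, following the paper:
  a leading zero is dropped, a trailing zero is dropped, and an interior zero
  merges its two neighbours into their sum.\<close>
fun red :: "nat list \<Rightarrow> nat list" where
  "red [] = []"
| "red (0 # xs) = red xs"
| "red [Suc a] = [Suc a]"
| "red [Suc a, 0] = [Suc a]"
| "red (Suc a # 0 # b # xs) = red ((Suc a + b) # xs)"
| "red (Suc a # Suc b # xs) = Suc a # red (Suc b # xs)"

lemma sum_list_red: "sum_list (red xs) = sum_list xs"
  by (induction xs rule: red.induct) auto

lemma sum_list_dec:
  fixes xs :: "nat list"
  assumes "i < length xs" "0 \<notin> set xs"
  shows "sum_list (xs[i := xs ! i - 1]) < sum_list xs"
  using assms
proof (induction xs arbitrary: i)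
  case Nil then show ?case by simp
next
  case (Cons x xs)
  show ?case
  proof (cases i)
    case 0
    have "x \<noteq> 0" using Cons.prems by simp
    then show ?thesis using 0 by (simp add: Suc_leI)
  next
    case (Suc j)
    then have "sum_list (xs[j := xs ! j - 1]) < sum_list xs"
      using Cons by simp
    then show ?thesis using Suc by simp
  qed
qed

text \<open>The function F on tuples of positive integers. Values on lists containing
  a zero (or the empty list) are junk and never used for positive tuples.\<close>
function F :: "nat list \<Rightarrow> nat" where
  "F xs = (if length xs \<le> 1 \<or> 0 \<in> set xs then 1
           else (\<Sum>i<length xs. F (red (xs[i := xs ! i - 1]))))"
  by pat_completeness auto
termination
  apply (relation "measure sum_list")
   apply simp
  apply (simp add: sum_list_red)
  using sum_list_dec by (metis One_nat_def leI)

declare F.simps[simp del]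

end

theory Submission
  imports Defs "HOL.Binomial_Plus"
begin

text \<open>Composing \<^const>\<open>F\<close> with \<^const>\<open>red\<close> extends \<open>F\<close> to tuples with zero
  entries. On quadruples, \<open>F\<^sub>4 = F \<circ> red\<close> then satisfies a four-term Pascal rule whose
  boundary values (some entry zero) are values of \<open>F\<^sub>3\<close> or \<open>F\<^sub>2\<close>, and
  \<open>F\<^sub>2(x,y) = C(x+y,x)\<close>.

  Comparing the two recursions term by term, induction on the sum of the entries gives
  \<open>F(m,b,a,n) \<le> F(m,a,b,n)\<close> for \<open>m \<le> n\<close> and \<open>a \<le> b\<close>. The boundary cases are the
  analogue for triples, the case \<open>m = n\<close>, where reversal symmetry gives equality, and
  \<open>C(N,m) \<le> C(N,n)\<close> for \<open>m \<le> n\<close>, \<open>m + n \<le> N\<close>. Strictness comes from this binomial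
  inequality, which is strict for \<open>m < n\<close>, \<open>m + n < N\<close>, reached by decreasing \<open>a\<close> to \<open>0\<close>.\<close>

lemma red_eq_self: "0 \<notin> set xs \<Longrightarrow> red xs = xs"
  by (induction xs rule: red.induct) auto

lemma F_length_le_1: "length xs \<le> 1 \<Longrightarrow> F xs = 1"
  by (simp add: F.simps)

definition F2 :: "nat \<Rightarrow> nat \<Rightarrow> nat" where
  "F2 x y = F (red [x, y])"

definition F3 :: "nat \<Rightarrow> nat \<Rightarrow> nat \<Rightarrow> nat" where
  "F3 a b c = F (red [a, b, c])"

definition F4 :: "nat \<Rightarrow> nat \<Rightarrow> nat \<Rightarrow> nat \<Rightarrow> nat" where
  "F4 m a b n = F (red [m, a, b, n])"

lemma F2_Suc_Suc: "F2 (Suc x) (Suc y) = F2 x (Suc y) + F2 (Suc x) y"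
  unfolding F2_def by (subst F.simps) (simp add: red_eq_self lessThan_Suc)

lemma F3_Suc_Suc_Suc:
  "F3 (Suc a) (Suc b) (Suc c) = F3 a (Suc b) (Suc c) + F3 (Suc a) b (Suc c) + F3 (Suc a) (Suc b) c"
  unfolding F3_def by (subst F.simps) (simp add: red_eq_self lessThan_Suc)

lemma F4_Suc_Suc_Suc_Suc:
  "F4 (Suc m) (Suc a) (Suc b) (Suc n) =
     F4 m (Suc a) (Suc b) (Suc n) + F4 (Suc m) a (Suc b) (Suc n)
     + F4 (Suc m) (Suc a) b (Suc n) + F4 (Suc m) (Suc a) (Suc b) n"
  unfolding F4_def by (subst F.simps) (simp add: red_eq_self lessThan_Suc)

lemma F2_0_1 [simp]: "F2 0 y = 1"
  unfolding F2_def by (cases y) (simp_all add: F_length_le_1)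

lemma F2_0_2 [simp]: "F2 x 0 = 1"
  unfolding F2_def by (cases x) (simp_all add: F_length_le_1)

lemma F3_0_1 [simp]: "F3 0 b c = F2 b c"
  unfolding F3_def F2_def by simp

lemma F3_0_2 [simp]: "F3 a 0 c = 1"
  unfolding F3_def by (cases a; cases c) (simp_all add: F_length_le_1)

lemma F3_0_3 [simp]: "F3 a b 0 = F2 a b"
  unfolding F3_def F2_def by (cases a; cases b) (simp_all add: F_length_le_1)

lemma F4_0_1 [simp]: "F4 0 a b n = F3 a b n"
  unfolding F4_def F3_def by simp

lemma F4_0_2 [simp]: "F4 m 0 b n = F2 (m + b) n"
  unfolding F4_def F2_def by (cases m; cases b) (simp_all add: F_length_le_1)

lemma F4_0_3 [simp]: "F4 m a 0 n = F2 m (a + n)"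
  unfolding F4_def F2_def by (cases m; cases a; cases n) (simp_all add: F_length_le_1 red_eq_self)

lemma F4_0_4 [simp]: "F4 m a b 0 = F3 m a b"
  unfolding F4_def F3_def by (cases m; cases a; cases b) (simp_all add: F_length_le_1)

lemma F2_eq_binomial: "F2 x y = (x + y choose x)"
proof (induction x arbitrary: y)
  case 0
  then show ?case by simp
next
  case (Suc x)
  then show ?case by (induction y) (simp_all add: F2_Suc_Suc)
qed

lemma F2_pos: "0 < F2 x y"
  by (simp add: F2_eq_binomial)

lemma F2_commute: "F2 x y = F2 y x"
  by (metis F2_eq_binomial add.commute add_diff_cancel_left' binomial_symmetric le_add1)

lemma F3_rev: "F3 a b c = F3 c b a"
proof (induction "a + b + c" arbitrary: a b c rule: less_induct)
  case less
  show ?case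
  proof (cases "a = 0 \<or> b = 0 \<or> c = 0")
    case True
    then show ?thesis by (auto simp: F2_commute)
  next
    case False
    then obtain a' b' c' where "a = Suc a'" "b = Suc b'" "c = Suc c'"
      by (metis not0_implies_Suc)
    then show ?thesis using less by (simp add: F3_Suc_Suc_Suc)
  qed
qed

lemma F4_rev: "F4 m a b n = F4 n b a m"
proof (induction "m + a + b + n" arbitrary: m a b n rule: less_induct)
  case less
  show ?case
  proof (cases "m = 0 \<or> a = 0 \<or> b = 0 \<or> n = 0")
    case True
    then show ?thesis by (auto simp: F2_commute F3_rev add.commute)
  next
    case False
    then obtain m' a' b' n' where "m = Suc m'" "a = Suc a'" "b = Suc b'" "n = Suc n'"
      by (metis not0_implies_Suc)
    then show ?thesis using less by (simp add: F4_Suc_Suc_Suc_Suc)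
  qed
qed

lemma binomial_less_binomial:
  assumes "k < k'" "k + k' < N"
  shows "N choose k < N choose k'"
proof (cases "2 * k' \<le> N")
  case True
  with assms(1) show ?thesis by (rule binomial_strict_mono)
next
  case False
  then have "N choose k < N choose (N - k')"
    using assms by (intro binomial_strict_mono) auto
  also have "\<dots> = N choose k'"
    using assms by (simp add: binomial_symmetric[symmetric])
  finally show ?thesis .
qed

lemma F2_shift_less:
  assumes "m < n" "0 < b"
  shows "F2 m (b + n) < F2 (m + b) n"
proof -
  have "F2 m (b + n) = (m + b + n) choose m"
    by (simp add: F2_eq_binomial add.assoc)
  also have "\<dots> < (m + b + n) choose n"
    using assms by (intro binomial_less_binomial) auto
  also have "\<dots> = F2 n (m + b)"
    by (simp add: F2_eq_binomial add_ac)
  also have "\<dots> = F2 (m + b) n"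
    by (rule F2_commute)
  finally show ?thesis .
qed

lemma F2_shift_le:
  assumes "m \<le> n"
  shows "F2 m (b + n) \<le> F2 (m + b) n"
proof -
  consider "m < n" "0 < b" | "m = n" | "b = 0"
    using assms by linarith
  then show ?thesis
  proof cases
    case 1
    then show ?thesis using F2_shift_less by (simp add: less_imp_le)
  next
    case 2
    then show ?thesis using F2_commute[of n "b + n"] by (simp add: add.commute)
  qed simp
qed

lemma F3_swap_le: "a \<le> b \<Longrightarrow> F3 b a c \<le> F3 a b c"
proof (induction "a + b + c" arbitrary: a b c rule: less_induct)
  case less
  consider "a = b" | "a = 0" | "c = 0"
    | a' b' c' where "a = Suc a'" "b = Suc b'" "c = Suc c'" "a < b"
    using less.prems by (cases a; cases b; cases c) (auto simp: le_less)
  then show ?case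
  proof cases
    case 2
    then show ?thesis using F2_pos[of b c] by simp
  next
    case 3
    then show ?thesis by (simp add: F2_commute)
  next
    case 4
    have "F3 b a' c \<le> F3 a' b c" "F3 b' a c \<le> F3 a b' c" "F3 b a c' \<le> F3 a b c'"
      using less 4 by simp_all
    with 4 show ?thesis by (simp add: F3_Suc_Suc_Suc)
  qed simp
qed

lemma F4_swap_le: "m \<le> n \<Longrightarrow> a \<le> b \<Longrightarrow> F4 m b a n \<le> F4 m a b n"
proof (induction "m + a + b + n" arbitrary: m a b n rule: less_induct)
  case less
  consider "a = b" | "m = n" | "m = 0" | "a = 0"
    | m' a' b' n' where "m = Suc m'" "a = Suc a'" "b = Suc b'" "n = Suc n'" "m < n" "a < b"
    using less.prems by (cases m; cases a; cases b; cases n) (auto simp: le_less)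
  then show ?case
  proof cases
    case 2
    then show ?thesis using F4_rev[of n b a n] by simp
  next
    case 3
    then show ?thesis using F3_swap_le less.prems by simp
  next
    case 4
    then show ?thesis using F2_shift_le less.prems by simp
  next
    case 5
    have "F4 m' b a n \<le> F4 m' a b n" "F4 m b a' n \<le> F4 m a' b n"
      "F4 m b' a n \<le> F4 m a b' n" "F4 m b a n' \<le> F4 m a b n'"
      using less 5 by simp_all
    with 5 show ?thesis by (simp add: F4_Suc_Suc_Suc_Suc)
  qed simp
qed

lemma F4_swap_less: "0 < m \<Longrightarrow> m < n \<Longrightarrow> 0 < a \<Longrightarrow> a < b \<Longrightarrow> F4 m b a n < F4 m a b n"
proof (induction a arbitrary: b)
  case 0
  then show ?case by simp
next
  case (Suc a)
  obtain m' n' b' where m: "m = Suc m'" and n: "n = Suc n'" "m \<le> n'" and b: "b = Suc b'" "Suc a \<le> b'"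
    using Suc.prems by (cases m; cases n; cases b) auto
  have "F4 m b a n < F4 m a b n"
    using Suc F2_shift_less[of m n b] by (cases "a = 0") simp_all
  moreover have "F4 m' b (Suc a) n \<le> F4 m' (Suc a) b n" "F4 m b' (Suc a) n \<le> F4 m (Suc a) b' n"
    "F4 m b (Suc a) n' \<le> F4 m (Suc a) b n'"
    using F4_swap_le Suc.prems m n b by simp_all
  ultimately show ?case using m n b by (simp add: F4_Suc_Suc_Suc_Suc)
qed

theorem proposition6:
  fixes m n a b :: nat
  assumes "0 < m" "0 < n" "0 < a" "0 < b" "m < n" "a < b"
  shows "F [m, a, b, n] > F [m, b, a, n]"
proof -
  have "F [m, a, b, n] = F4 m a b n" "F [m, b, a, n] = F4 m b a n"
    unfolding F4_def using assms by (simp_all add: red_eq_self)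
  with F4_swap_less assms show ?thesis by simp
qed

end
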